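(* Let $\alpha<0$, $\beta>0$, $\gamma\in(0,1)$, and let $D$ be a finite cylinder around the $x^{(3)}$-axis with lateral boundary $\{r=1\}$. There does not exist a smooth ASE solution on $D\times[0,T_0)$ (satisfying the Basic assumptions) which is an asymptotic self-similar blow-up solution of the form $$v=\frac{1}{(T_0-t)^\alpha}\Theta\Big(\frac{x}{(T_0-t)^{1-\alpha}}\Big)e_\theta+\frac{(T_0-t)^\beta}{(T_0-t)^\alpha}V^r\Big(\frac{x}{(T_0-t)^{1-\alpha}}\Big)e_r+\frac{(T_0-t)^\beta}{(T_0-t)^\alpha}V^{(3)}\Big(\frac{x}{(T_0-t)^{1-\alpha}}\Big)e_3+\frac{o(T_0-t)}{(T_0-t)^\alpha}W(x,t)$$ with the following properties: (a) the spatial center of the blow-up sequence is the side boundary point $p_0=(1,0,0)$ in $(r,\theta,x^{(3)})$ coordinates; (b) the profiles $\Theta,V^r,V^{(3)}$ are nontrivial local $C^{2,\gamma}_x$ functions and the error $W$ is a local $C^{2,2,\gamma}_{x,t}$ function.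
   Context: Cylindrical coordinates: $r=\sqrt{(x^{(1)})^2+(x^{(2)})^2}$, $e_r,e_\theta,e_3$ the radial, angular and axial unit vectors. ASE: axially symmetric Euler equations $\partial_t v+v\cdot\nabla v+\nabla p=0$, $\nabla\cdot v=0$, with $v=v^re_r+v^\theta e_\theta+v^{(3)}e_3$ and components depending only on $(r,x^{(3)},t)$. Basic assumptions: no penetration $v\cdot n=0$ on the lateral boundary and periodicity in $x^{(3)}$ across top and bottom. $o(T_0-t)$ denotes a scalar factor that is $o(T_0-t)$ as $t\to T_0$. The blow-up sequence centered at $p_0$ is $\tilde v_k(\tilde x,\tilde t)=Q_k^{-1}v(Q_k^{-(1-\alpha)/\alpha}\tilde x+p_0,Q_k^{-1/\alpha}\tilde t+t_k)$ with $Q_k=(T_0-t_k)^{-\alpha}$ and $t_k\uparrow T_0$ (so $Q_k\to0$ since $\alpha<0$). *)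

theory Defs
  imports "HOL-Analysis.Analysis" "HOL-Library.Landau_Symbols"
begin

definition rad :: "(real^3) \<Rightarrow> real" where
  "rad x = sqrt ((x$1)^2 + (x$2)^2)"

definition e_r :: "(real^3) \<Rightarrow> real^3" where
  "e_r x = vector [x$1 / rad x, x$2 / rad x, 0]"

definition e_th :: "(real^3) \<Rightarrow> real^3" where
  "e_th x = vector [- (x$2) / rad x, x$1 / rad x, 0]"

definition e_3 :: "real^3" where
  "e_3 = vector [0, 0, 1]"

text \<open>The side boundary point p0 = (r,theta,x3) = (1,0,0), i.e. Cartesian (1,0,0).\<close>
definition p0 :: "real^3" where
  "p0 = vector [1, 0, 0]"

text \<open>Infinite solid cylinder of radius 1 (solutions are L-periodic in x3 on it) and the
  finite cylinder D (one period, centred at height 0 so that p0 lies in it).\<close>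
definition cyl :: "(real^3) set" where
  "cyl = {x. rad x \<le> 1}"

definition fin_cyl :: "real \<Rightarrow> (real^3) set" where
  "fin_cyl L = {x. rad x \<le> 1 \<and> - L / 2 \<le> x$3 \<and> x$3 \<le> L / 2}"

primrec iter_dd :: "('a::real_normed_vector \<Rightarrow> 'b::real_normed_vector) \<Rightarrow> 'a list \<Rightarrow> 'a \<Rightarrow> 'b" where
  "iter_dd f [] = f"
| "iter_dd f (u # us) = (\<lambda>x. frechet_derivative (iter_dd f us) (at x) u)"

definition smooth_on_open :: "'a::real_normed_vector set \<Rightarrow> ('a \<Rightarrow> 'b::real_normed_vector) \<Rightarrow> bool" where
  "smooth_on_open U f \<longleftrightarrow> open U \<and> (\<forall>us. iter_dd f us differentiable_on U)"

definition dx :: "((real^3) \<Rightarrow> real \<Rightarrow> 'b::real_normed_vector) \<Rightarrow> (real^3) \<Rightarrow> real \<Rightarrow> 3 \<Rightarrow> 'b" where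
  "dx f x t i = frechet_derivative (\<lambda>y. f y t) (at x) (axis i 1)"

definition dt :: "((real^3) \<Rightarrow> real \<Rightarrow> 'b::real_normed_vector) \<Rightarrow> (real^3) \<Rightarrow> real \<Rightarrow> 'b" where
  "dt f x t = frechet_derivative (\<lambda>s. f x s) (at t) 1"

text \<open>v, p are smooth on an open neighbourhood of cyl x [0,T0) (smoothness up to the boundary),
  satisfy the Euler equations there, v is axially symmetric, satisfies no penetration
  on r = 1, and (v,p) are L-periodic in x3.\<close>
definition ASE_solution ::
  "real \<Rightarrow> real \<Rightarrow> ((real^3) \<Rightarrow> real \<Rightarrow> real^3) \<Rightarrow> ((real^3) \<Rightarrow> real \<Rightarrow> real) \<Rightarrow> bool" where
  "ASE_solution L T0 v p \<longleftrightarrow>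
     (\<exists>U. cyl \<times> {0..<T0} \<subseteq> U \<and> smooth_on_open U (\<lambda>(x,t). v x t)
          \<and> smooth_on_open U (\<lambda>(x,t). p x t))
   \<and> (\<forall>x t. x \<in> cyl \<and> 0 \<le> t \<and> t < T0 \<longrightarrow>
        dt v x t + (\<Sum>j\<in>UNIV. (v x t $ j) *\<^sub>R dx v x t j) + (\<chi> i. dx p x t i) = 0
        \<and> (\<Sum>j\<in>UNIV. dx v x t j $ j) = 0)
   \<and> (\<forall>x y t. x \<in> cyl \<and> 0 < rad x \<and> rad y = rad x \<and> y$3 = x$3 \<and> 0 \<le> t \<and> t < T0 \<longrightarrow>
        v x t \<bullet> e_r x = v y t \<bullet> e_r y \<and> v x t \<bullet> e_th x = v y t \<bullet> e_th y
        \<and> v x t \<bullet> e_3 = v y t \<bullet> e_3)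
   \<and> (\<forall>x t. rad x = 1 \<and> 0 \<le> t \<and> t < T0 \<longrightarrow> v x t \<bullet> e_r x = 0)
   \<and> (\<forall>x t. x \<in> cyl \<and> 0 \<le> t \<and> t < T0 \<longrightarrow>
        v (x + L *\<^sub>R e_3) t = v x t \<and> p (x + L *\<^sub>R e_3) t = p x t)"

definition axes3 :: "(real^3) set" where
  "axes3 = range (\<lambda>i::3. axis i (1::real))"

definition C2g_loc :: "real \<Rightarrow> (real^3) set \<Rightarrow> ((real^3) \<Rightarrow> real) \<Rightarrow> bool" where
  "C2g_loc \<gamma> S F \<longleftrightarrow>
     (\<exists>U. open U \<and> S \<subseteq> U
        \<and> (\<forall>us. set us \<subseteq> axes3 \<and> length us \<le> 1 \<longrightarrow> iter_dd F us differentiable_on U)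
        \<and> (\<forall>us. set us \<subseteq> axes3 \<and> length us \<le> 2 \<longrightarrow> continuous_on U (iter_dd F us)))
   \<and> (\<forall>K. bounded K \<and> K \<subseteq> S \<longrightarrow>
        (\<forall>us. set us \<subseteq> axes3 \<and> length us = 2 \<longrightarrow>
          (\<exists>C. \<forall>x\<in>K. \<forall>y\<in>K. \<bar>iter_dd F us x - iter_dd F us y\<bar> \<le> C * dist x y powr \<gamma>)))"

definition sp_dirs :: "((real^3) \<times> real) set" where
  "sp_dirs = (\<lambda>u. (u, 0)) ` axes3"

definition tm_dir :: "(real^3) \<times> real" where
  "tm_dir = (0, 1)"

definition adm22 :: "((real^3) \<times> real) list \<Rightarrow> bool" where
  "adm22 us \<longleftrightarrow> set us \<subseteq> sp_dirs \<union> {tm_dir}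
     \<and> length (filter (\<lambda>u. u \<in> sp_dirs) us) \<le> 2
     \<and> length (filter (\<lambda>u. u = tm_dir) us) \<le> 2"

definition C22g_loc :: "real \<Rightarrow> (real^3) set \<Rightarrow> real set \<Rightarrow> ((real^3) \<Rightarrow> real \<Rightarrow> real^3) \<Rightarrow> bool" where
  "C22g_loc \<gamma> S I W \<longleftrightarrow>
     (\<exists>U. open U \<and> S \<times> I \<subseteq> U
        \<and> (\<forall>us. (\<exists>u. adm22 (u # us)) \<longrightarrow> iter_dd (\<lambda>(x,t). W x t) us differentiable_on U)
        \<and> (\<forall>us. adm22 us \<longrightarrow> continuous_on U (iter_dd (\<lambda>(x,t). W x t) us)))
   \<and> (\<forall>K. bounded K \<longrightarrow> (\<forall>us. adm22 us \<longrightarrow>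
        (\<exists>C. \<forall>x\<in>K \<inter> S. \<forall>t\<in>I.
            norm (iter_dd (\<lambda>(x,t). W x t) us (x, t)) \<le> C
          \<and> (\<forall>y\<in>K \<inter> S. norm (iter_dd (\<lambda>(x,t). W x t) us (x, t)
                               - iter_dd (\<lambda>(x,t). W x t) us (y, t)) \<le> C * dist x y powr \<gamma>))))"

end

theory Submission
  imports Defs
begin

text \<open>Solving the ansatz for its e_th component expresses Theta at
  y = (x - p0) / (T0 - t) powr (1 - alpha) through the swirl v \<bullet> e_th at time t, up to an error
  that tends to 0 uniformly as t \<rightarrow> T0. The swirl is constant on horizontal circles and, by
  continuity of v, tends to 0 at the axis. For y1 < 0 the point x = p0 + (T0 - t) powr (1 - alpha) y
  lies in the cylinder; moving it along its circle to the far side of the axis gives a point whose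
  rescaled image is also the image of an axis point at a later time. Hence Theta y is bounded by
  three error terms, so Theta vanishes on the half-space y1 \<le> 0, contradicting its nontriviality.\<close>

lemma eventually_at_right_0_mult_less:
  assumes "0 < b"
  shows "\<forall>\<^sub>F s in at_right (0::real). s * a < b"
proof (rule order_tendstoD(2))
  show "((\<lambda>s. s * a) \<longlongrightarrow> 0 * a) (at_right 0)"
    by (intro tendsto_mult tendsto_ident_at tendsto_const)
qed (use assms in simp)

lemma uniform_limit_null_mult_bounded:
  fixes f :: "'a \<Rightarrow> real"
  assumes f: "(f \<longlongrightarrow> 0) F" and h: "\<forall>\<^sub>F n in F. \<forall>x\<in>S. \<bar>h n x\<bar> \<le> B"
  shows "uniform_limit S (\<lambda>n x. f n * h n x) (\<lambda>_. 0) F"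
proof (rule uniform_limitI)
  fix e :: real
  assume "0 < e"
  then have "\<forall>\<^sub>F n in F. dist (f n) 0 < e / (\<bar>B\<bar> + 1)"
    by (intro tendstoD[OF f]) simp
  with h show "\<forall>\<^sub>F n in F. \<forall>x\<in>S. dist (f n * h n x) 0 < e"
  proof eventually_elim
    case (elim n)
    have "\<bar>f n * h n x\<bar> < e" if "x \<in> S" for x
    proof -
      have "\<bar>f n * h n x\<bar> \<le> \<bar>f n\<bar> * (\<bar>B\<bar> + 1)"
        unfolding abs_mult using elim(1) that by (intro mult_left_mono) fastforce+
      also have "\<dots> < e"
        using elim(2) by (simp add: dist_real_def pos_less_divide_eq)
      finally show ?thesis .
    qed
    then show ?case
      by (simp add: dist_real_def)
  qed
qed

lemma smallo_tendsto_0: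
  fixes f g :: "'a \<Rightarrow> real"
  assumes "f \<in> o[F](g)" and "(g \<longlongrightarrow> 0) F"
  shows "(f \<longlongrightarrow> 0) F"
proof (rule Lim_null_comparison)
  show "\<forall>\<^sub>F x in F. norm (f x) \<le> norm (g x)"
    using landau_o.smallD[OF assms(1), of 1] by simp
  show "((\<lambda>x. norm (g x)) \<longlongrightarrow> 0) F"
    using tendsto_norm[OF assms(2)] by simp
qed

section \<open>The cylindrical frame and the swirl\<close>

lemma inner_vec3: "(x::real^3) \<bullet> y = x$1 * y$1 + x$2 * y$2 + x$3 * y$3"
  by (simp add: inner_vec_def sum_3)

lemma p0_nth [simp]: "p0$1 = 1" "p0$2 = 0" "p0$3 = 0"
  by (simp_all add: p0_def)

lemma e_3_nth [simp]: "e_3$1 = 0" "e_3$2 = 0" "e_3$3 = 1"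
  by (simp_all add: e_3_def)

lemma rad_nonneg: "0 \<le> rad x"
  by (simp add: rad_def)

lemma rad_square: "(rad x)^2 = (x$1)^2 + (x$2)^2"
  by (simp add: rad_def)

lemma abs_nth_le_rad: "\<bar>x$1\<bar> \<le> rad x" "\<bar>x$2\<bar> \<le> rad x"
  unfolding rad_def by (rule real_le_rsqrt; simp add: power2_abs)+

lemma rad_eq_0_iff: "rad x = 0 \<longleftrightarrow> x$1 = 0 \<and> x$2 = 0"
  by (simp add: rad_def)

lemma
  assumes "0 < rad x"
  shows e_th_inner_e_th: "e_th x \<bullet> e_th x = 1"
    and e_r_inner_e_th: "e_r x \<bullet> e_th x = 0"
    and e_3_inner_e_th: "e_3 \<bullet> e_th x = 0"
proof -
  have "e_th x \<bullet> e_th x = ((x$1)^2 + (x$2)^2) / (rad x)^2"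
    by (simp add: inner_vec3 e_th_def power2_eq_square add_divide_distrib)
  then show "e_th x \<bullet> e_th x = 1"
    using assms by (simp flip: rad_square)
  show "e_r x \<bullet> e_th x = 0" "e_3 \<bullet> e_th x = 0"
    by (simp_all add: inner_vec3 e_th_def e_r_def e_3_def field_simps)
qed

lemma norm_e_th_le_1: "norm (e_th x) \<le> 1"
proof (cases "rad x = 0")
  case True
  then have "e_th x = 0"
    by (simp add: e_th_def vec_eq_iff forall_3)
  then show ?thesis by simp
next
  case False
  then show ?thesis
    using e_th_inner_e_th[of x] rad_nonneg[of x] by (simp add: norm_eq_sqrt_inner)
qed

lemma bounded_fin_cyl: "bounded (fin_cyl L)"
proof -
  have "norm x \<le> 2 + \<bar>L\<bar>" if "x \<in> fin_cyl L" for x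
  proof -
    have "norm x \<le> \<bar>x$1\<bar> + \<bar>x$2\<bar> + \<bar>x$3\<bar>"
      using norm_le_l1_cart[of x] by (simp add: sum_3)
    then show ?thesis
      using that abs_nth_le_rad[of x] by (auto simp: fin_cyl_def)
  qed
  then show ?thesis
    unfolding bounded_iff by blast
qed

lemma fin_cyl_subset_cyl: "fin_cyl L \<subseteq> cyl"
  by (auto simp: fin_cyl_def cyl_def)

lemma p0_plus_scaled_mem_fin_cyl:
  assumes "0 \<le> s" "s * ((y$1)^2 + (y$2)^2) \<le> - 2 * y$1" "s * \<bar>y$3\<bar> \<le> L / 2"
  shows "p0 + s *\<^sub>R y \<in> fin_cyl L"
proof -
  have "(rad (p0 + s *\<^sub>R y))^2 = 1 + s * (2 * y$1 + s * ((y$1)^2 + (y$2)^2))"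
    unfolding rad_square by (simp add: power2_eq_square algebra_simps)
  also have "\<dots> \<le> 1"
    using assms(1,2) by (simp add: mult_nonneg_nonpos)
  finally have "rad (p0 + s *\<^sub>R y) \<le> 1"
    by (simp add: power_le_one_iff rad_nonneg)
  moreover have "\<bar>s * y$3\<bar> \<le> L / 2"
    using assms(1,3) by (simp add: abs_mult)
  ultimately show ?thesis
    by (simp add: fin_cyl_def; arith)
qed

lemma rad_pos_of_nth1_pos: "0 < x$1 \<Longrightarrow> 0 < rad x"
  using abs_nth_le_rad(1)[of x] by linarith

definition swirl :: "(real^3 \<Rightarrow> real^3) \<Rightarrow> real^3 \<Rightarrow> real" where
  "swirl w x = w x \<bullet> e_th x"

lemma abs_swirl_le_norm: "\<bar>swirl w x\<bar> \<le> norm (w x)"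
  using Cauchy_Schwarz_ineq2[of "w x" "e_th x"] norm_e_th_le_1[of x]
  unfolding swirl_def by (metis mult_left_mono mult.right_neutral norm_ge_zero order_trans)

text \<open>On the axis the swirl direction e_th flips when one crosses from x1 > 0 to x1 < 0, so
  axial symmetry makes the second velocity component odd along the x1-direction; by continuity
  it vanishes on the axis.\<close>
lemma swirl_tendsto_0_at_axis:
  assumes w: "continuous_on cyl w" and a: "rad a = 0"
    and sym: "\<And>x y. x \<in> cyl \<Longrightarrow> 0 < rad x \<Longrightarrow> rad y = rad x \<Longrightarrow> y$3 = x$3 \<Longrightarrow>
                 swirl w y = swirl w x"
  shows "((\<lambda>h. swirl w (a + h *\<^sub>R p0)) \<longlongrightarrow> 0) (at_right 0)"
proof -
  define \<phi> where "\<phi> h = w (a + h *\<^sub>R p0) $ 2" for h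
  have a12: "a$1 = 0" "a$2 = 0"
    using a by (simp_all add: rad_eq_0_iff)
  have rad_a_plus: "rad (a + h *\<^sub>R p0) = \<bar>h\<bar>" for h
    by (simp add: rad_def a12)
  have swirl_eq: "swirl w (a + h *\<^sub>R p0) = sgn h * \<phi> h" for h
    by (simp add: swirl_def \<phi>_def inner_vec3 e_th_def rad_a_plus a12 sgn_real_def)
  have in_cyl: "a + h *\<^sub>R p0 \<in> cyl" if "\<bar>h\<bar> \<le> 1" for h
    using that by (simp add: cyl_def rad_a_plus)
  have near_0: "\<forall>\<^sub>F h in at_right 0. 0 < h \<and> h \<le> (1::real)"
    unfolding eventually_at_right_field by (intro exI[of _ 1]) auto
  have lim: "((\<lambda>h. \<phi> (c * h)) \<longlongrightarrow> \<phi> 0) (at_right 0)" if "\<bar>c\<bar> = 1" for c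
  proof -
    have "((\<lambda>h. w (a + (c * h) *\<^sub>R p0)) \<longlongrightarrow> w (a + 0 *\<^sub>R p0)) (at_right 0)"
    proof (rule continuous_on_tendsto_compose[OF w])
      show "((\<lambda>h. a + (c * h) *\<^sub>R p0) \<longlongrightarrow> a + 0 *\<^sub>R p0) (at_right 0)"
        by (intro tendsto_eq_intros) auto
      show "\<forall>\<^sub>F h in at_right 0. a + (c * h) *\<^sub>R p0 \<in> cyl"
        using near_0 by eventually_elim (use that in_cyl in \<open>simp add: abs_mult\<close>)
    qed (use in_cyl[of 0] in simp)
    then show ?thesis
      unfolding \<phi>_def by (intro tendsto_vec_nth)
  qed
  have odd: "- \<phi> (- h) = \<phi> h" if "0 < h" "h \<le> 1" for h
  proof -
    have "swirl w (a + (- h) *\<^sub>R p0) = swirl w (a + h *\<^sub>R p0)"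
    proof (rule sym)
      show "a + h *\<^sub>R p0 \<in> cyl"
        using that by (intro in_cyl) simp
      show "0 < rad (a + h *\<^sub>R p0)"
        unfolding rad_a_plus using that by simp
      show "rad (a + (- h) *\<^sub>R p0) = rad (a + h *\<^sub>R p0)"
        by (simp only: rad_a_plus abs_minus_cancel)
    qed simp
    then show ?thesis
      using that by (simp only: swirl_eq) simp
  qed
  have lim_pos: "(\<phi> \<longlongrightarrow> \<phi> 0) (at_right 0)"
    using lim[of 1] by simp
  have lim_neg: "((\<lambda>h. - \<phi> (- h)) \<longlongrightarrow> - \<phi> 0) (at_right 0)"
    using tendsto_minus[OF lim[of "-1"]] by simp
  have "\<forall>\<^sub>F h in at_right 0. - \<phi> (- h) = \<phi> h"
    using near_0 by eventually_elim (use odd in blast)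
  then have "(\<phi> \<longlongrightarrow> - \<phi> 0) (at_right 0)"
    by (rule Lim_transform_eventually[OF lim_neg])
  then have "\<phi> 0 = - \<phi> 0"
    by (rule tendsto_unique[OF trivial_limit_at_right_real lim_pos])
  then have "(\<phi> \<longlongrightarrow> 0) (at_right 0)"
    using lim_pos by (simp add: eq_neg_iff_add_eq_0)
  moreover have "\<forall>\<^sub>F h in at_right 0. \<phi> h = swirl w (a + h *\<^sub>R p0)"
    using near_0 by eventually_elim (simp add: swirl_eq)
  ultimately show ?thesis
    by (rule Lim_transform_eventually)
qed

lemma swirl_ansatz_coefficient:
  assumes "0 < rad x" "a \<noteq> 0"
    and "v = (1 / a) *\<^sub>R (A *\<^sub>R e_th x) + k *\<^sub>R (B *\<^sub>R e_r x) + k *\<^sub>R (D *\<^sub>R e_3) + (G / a) *\<^sub>R u"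
  shows "A = a * (v \<bullet> e_th x) - G * (u \<bullet> e_th x)"
proof -
  have "v \<bullet> e_th x = A / a + (G / a) * (u \<bullet> e_th x)"
    using assms(3) e_th_inner_e_th[OF assms(1)] e_r_inner_e_th[OF assms(1)] e_3_inner_e_th[OF assms(1)]
    by (simp add: inner_add_left)
  then show ?thesis
    using assms(2) by (simp add: field_simps)
qed

section \<open>Rigidity of swirl blow-up profiles\<close>

text \<open>The blow-up profile Theta seen at spatial scale s (the scale (T0 - t) powr (1 - alpha) of
  the self-similar ansatz at time t): w s is the velocity at that time, k s the amplitude
  (T0 - t) powr alpha, and R s the contribution of the error term.\<close>
locale swirl_blowup_profile =
  fixes L s0 :: real and \<Theta> :: "real^3 \<Rightarrow> real" and w :: "real \<Rightarrow> real^3 \<Rightarrow> real^3"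
    and k :: "real \<Rightarrow> real" and R :: "real \<Rightarrow> real^3 \<Rightarrow> real"
  assumes L_pos: "0 < L" and s0_pos: "0 < s0"
    and Theta_continuous: "continuous_on {y. y$1 \<le> 0} \<Theta>"
    and velocity_continuous: "\<And>s. 0 < s \<Longrightarrow> s < s0 \<Longrightarrow> continuous_on cyl (w s)"
    and swirl_axisymmetric: "\<And>s x y. 0 < s \<Longrightarrow> s < s0 \<Longrightarrow> x \<in> cyl \<Longrightarrow> 0 < rad x \<Longrightarrow>
          rad y = rad x \<Longrightarrow> y$3 = x$3 \<Longrightarrow> swirl (w s) y = swirl (w s) x"
    and profile_eq: "\<And>s x. 0 < s \<Longrightarrow> s < s0 \<Longrightarrow> x \<in> fin_cyl L \<Longrightarrow> 0 < rad x \<Longrightarrow>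
          \<Theta> ((1 / s) *\<^sub>R (x - p0)) = k s * swirl (w s) x + R s x"
    and remainder_uniform_limit: "uniform_limit (fin_cyl L) R (\<lambda>_. 0) (at_right 0)"
begin

text \<open>The points c e_3 - (1/s) p0 are the images of the axis at scale s; there the rescaled swirl
  vanishes, so only the remainder is left.\<close>
lemma abs_Theta_axis_image_le:
  assumes s: "0 < s" "s < s0" and c: "s * \<bar>c\<bar> \<le> L / 2"
    and R_le: "\<forall>x\<in>fin_cyl L. \<bar>R s x\<bar> \<le> \<epsilon>"
  shows "\<bar>\<Theta> (c *\<^sub>R e_3 - (1 / s) *\<^sub>R p0)\<bar> \<le> \<epsilon>"
proof -
  define a where "a = (s * c) *\<^sub>R e_3"
  have rad_a: "rad a = 0"
    by (simp add: a_def rad_def)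
  have rad_a_plus: "rad (a + h *\<^sub>R p0) = \<bar>h\<bar>" for h
    by (simp add: a_def rad_def)
  have "\<bar>s * c\<bar> \<le> L / 2"
    using c s by (simp add: abs_mult)
  then have mem: "a + h *\<^sub>R p0 \<in> fin_cyl L" if "\<bar>h\<bar> \<le> 1" for h
    using that rad_a_plus[of h] unfolding fin_cyl_def by (simp add: a_def; arith)
  have image: "(1 / s) *\<^sub>R (a + h *\<^sub>R p0 - p0) = c *\<^sub>R e_3 - ((1 - h) / s) *\<^sub>R p0" for h
    using s by (simp add: a_def vec_eq_iff forall_3 field_simps)
  have near_0: "\<forall>\<^sub>F h in at_right 0. 0 < h \<and> h \<le> (1::real)"
    unfolding eventually_at_right_field by (intro exI[of _ 1]) auto
  have "((\<lambda>h. \<Theta> (c *\<^sub>R e_3 - ((1 - h) / s) *\<^sub>R p0))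
      \<longlongrightarrow> \<Theta> (c *\<^sub>R e_3 - (1 / s) *\<^sub>R p0)) (at_right 0)"
  proof (rule continuous_on_tendsto_compose[OF Theta_continuous])
    show "((\<lambda>h. c *\<^sub>R e_3 - ((1 - h) / s) *\<^sub>R p0)
        \<longlongrightarrow> c *\<^sub>R e_3 - (1 / s) *\<^sub>R p0) (at_right 0)"
      using s by (intro tendsto_eq_intros) auto
    show "\<forall>\<^sub>F h in at_right 0. c *\<^sub>R e_3 - ((1 - h) / s) *\<^sub>R p0 \<in> {y. y$1 \<le> 0}"
      using near_0 by eventually_elim (use s in simp)
  qed (use s in simp)
  then have lim_Theta: "((\<lambda>h. \<bar>\<Theta> ((1 / s) *\<^sub>R (a + h *\<^sub>R p0 - p0))\<bar>)
      \<longlongrightarrow> \<bar>\<Theta> (c *\<^sub>R e_3 - (1 / s) *\<^sub>R p0)\<bar>) (at_right 0)"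
    unfolding image by (rule tendsto_rabs)
  have "((\<lambda>h. \<bar>k s * swirl (w s) (a + h *\<^sub>R p0)\<bar> + \<epsilon>) \<longlongrightarrow> \<bar>k s * 0\<bar> + \<epsilon>) (at_right 0)"
    using swirl_tendsto_0_at_axis[OF velocity_continuous[OF s] rad_a swirl_axisymmetric[OF s]]
    by (intro tendsto_intros)
  then have lim_bound: "((\<lambda>h. \<bar>k s * swirl (w s) (a + h *\<^sub>R p0)\<bar> + \<epsilon>) \<longlongrightarrow> \<epsilon>) (at_right 0)"
    by simp
  have "\<forall>\<^sub>F h in at_right 0.
      \<bar>\<Theta> ((1 / s) *\<^sub>R (a + h *\<^sub>R p0 - p0))\<bar> \<le> \<bar>k s * swirl (w s) (a + h *\<^sub>R p0)\<bar> + \<epsilon>"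
    using near_0
  proof eventually_elim
    case (elim h)
    then have "a + h *\<^sub>R p0 \<in> fin_cyl L" "0 < rad (a + h *\<^sub>R p0)"
      by (simp_all add: mem rad_a_plus)
    then show ?case
      using profile_eq[OF s] R_le by fastforce
  qed
  then show ?thesis
    by (rule tendsto_le[OF trivial_limit_at_right_real lim_bound lim_Theta])
qed

text \<open>A point x0 of the cylinder near p0 is carried by axial symmetry to the point x1 with the
  same radius and height on the far side of the axis, and x1 is an axis image at a smaller scale.\<close>
lemma abs_Theta_le:
  assumes y: "y$1 < 0" and s: "0 < s" "s < s0"
    and small: "s * ((y$1)^2 + (y$2)^2) \<le> - 2 * y$1" "s * y$1 > -1" "s * \<bar>y$3\<bar> \<le> L / 2"
    and R_le: "\<And>s'. 0 < s' \<Longrightarrow> s' \<le> s \<Longrightarrow> \<forall>x\<in>fin_cyl L. \<bar>R s' x\<bar> \<le> \<epsilon>"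
  shows "\<bar>\<Theta> y\<bar> \<le> 3 * \<epsilon>"
proof -
  define x0 where "x0 = p0 + s *\<^sub>R y"
  define r where "r = rad x0"
  define x1 where "x1 = (s * y$3) *\<^sub>R e_3 - r *\<^sub>R p0"
  have x0: "x0 \<in> fin_cyl L"
    unfolding x0_def using s small by (intro p0_plus_scaled_mem_fin_cyl) auto
  have r: "0 < r"
    unfolding r_def x0_def using small by (intro rad_pos_of_nth1_pos) simp
  have rad_x1: "rad x1 = r"
    using r by (simp add: x1_def rad_def)
  have x1: "x1 \<in> fin_cyl L"
    using x0 rad_x1 by (simp add: fin_cyl_def x1_def x0_def r_def)
  have same_swirl: "swirl (w s) x1 = swirl (w s) x0"
    using x0 r fin_cyl_subset_cyl rad_x1
    by (intro swirl_axisymmetric[OF s]) (auto simp: r_def x1_def x0_def)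
  have at_x0: "\<Theta> y = k s * swirl (w s) x0 + R s x0"
    using profile_eq[OF s x0] r s by (simp add: r_def x0_def)
  have at_x1: "\<Theta> ((1 / s) *\<^sub>R (x1 - p0)) = k s * swirl (w s) x1 + R s x1"
    using profile_eq[OF s x1] r rad_x1 by simp
  have x1_image: "(1 / s) *\<^sub>R (x1 - p0) = y$3 *\<^sub>R e_3 - (1 / (s / (1 + r))) *\<^sub>R p0"
    using s r by (simp add: x1_def vec_eq_iff forall_3 field_simps)
  have "\<bar>\<Theta> ((1 / s) *\<^sub>R (x1 - p0))\<bar> \<le> \<epsilon>"
    unfolding x1_image
  proof (rule abs_Theta_axis_image_le)
    have "s / (1 + r) \<le> s"
      using s r by (simp add: field_simps)
    then show "s / (1 + r) * \<bar>y$3\<bar> \<le> L / 2"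
      using small(3) by (meson abs_ge_zero mult_right_mono order_trans)
    show "\<forall>x\<in>fin_cyl L. \<bar>R (s / (1 + r)) x\<bar> \<le> \<epsilon>"
      using R_le \<open>s / (1 + r) \<le> s\<close> s r by simp
    show "0 < s / (1 + r)" "s / (1 + r) < s0"
      using s r \<open>s / (1 + r) \<le> s\<close> by simp_all
  qed
  moreover have "\<Theta> y = \<Theta> ((1 / s) *\<^sub>R (x1 - p0)) + R s x0 - R s x1"
    using at_x0 at_x1 same_swirl by simp
  moreover have "\<bar>R s x0\<bar> \<le> \<epsilon>" "\<bar>R s x1\<bar> \<le> \<epsilon>"
    using R_le[OF s(1) order_refl] x0 x1 by blast+
  ultimately show ?thesis
    by linarith
qed

lemma Theta_eq_0_open_half_space:
  assumes y: "y$1 < 0"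
  shows "\<Theta> y = 0"
proof -
  have small: "\<bar>\<Theta> y\<bar> \<le> 3 * \<epsilon>" if \<epsilon>: "0 < \<epsilon>" for \<epsilon>
  proof -
    obtain \<delta> where \<delta>: "0 < \<delta>"
      and R_lt: "\<And>s. 0 < s \<Longrightarrow> s < \<delta> \<Longrightarrow> \<forall>x\<in>fin_cyl L. dist (R s x) 0 < \<epsilon>"
      using uniform_limitD[OF remainder_uniform_limit \<epsilon>] unfolding eventually_at_right_field by auto
    have R_le: "\<forall>x\<in>fin_cyl L. \<bar>R s x\<bar> \<le> \<epsilon>" if "0 < s" "s < \<delta>" for s
      using R_lt[OF that] by (simp add: dist_real_def less_imp_le)
    have "\<forall>\<^sub>F s in at_right 0. 0 < s \<and> s * 1 < min s0 \<delta> \<and> s * ((y$1)^2 + (y$2)^2) < - 2 * y$1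
        \<and> s * (- y$1) < 1 \<and> s * \<bar>y$3\<bar> < L / 2"
      using s0_pos \<delta> y L_pos
      by (intro eventually_conj eventually_at_right_less eventually_at_right_0_mult_less) auto
    from eventually_happens'[OF trivial_limit_at_right_real this]
    obtain s where "0 < s" "s < min s0 \<delta>" "s * ((y$1)^2 + (y$2)^2) < - 2 * y$1"
        "s * (- y$1) < 1" "s * \<bar>y$3\<bar> < L / 2"
      by auto
    then show ?thesis
      using R_le by (intro abs_Theta_le[OF y]) auto
  qed
  have "\<bar>\<Theta> y\<bar> \<le> 0 + e" if "0 < e" for e
    using small[of "e / 3"] that by simp
  then have "\<bar>\<Theta> y\<bar> \<le> 0"
    by (rule field_le_epsilon)
  then show ?thesis
    by simp
qed

lemma Theta_eq_0:
  assumes y: "y$1 \<le> 0"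
  shows "\<Theta> y = 0"
proof -
  have "((\<lambda>h. \<Theta> (y - h *\<^sub>R p0)) \<longlongrightarrow> \<Theta> (y - 0 *\<^sub>R p0)) (at_right 0)"
  proof (rule continuous_on_tendsto_compose[OF Theta_continuous])
    show "\<forall>\<^sub>F h in at_right 0. y - h *\<^sub>R p0 \<in> {y. y$1 \<le> 0}"
      using eventually_at_right_less by eventually_elim (use y in simp)
  qed (use y in \<open>auto intro!: tendsto_eq_intros\<close>)
  moreover have "\<forall>\<^sub>F h in at_right 0. 0 = \<Theta> (y - h *\<^sub>R p0)"
    using eventually_at_right_less
    by eventually_elim (use y in \<open>simp add: Theta_eq_0_open_half_space\<close>)
  then have "((\<lambda>h. \<Theta> (y - h *\<^sub>R p0)) \<longlongrightarrow> 0) (at_right 0)"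
    by (rule Lim_transform_eventually[OF tendsto_const])
  ultimately have "\<Theta> (y - 0 *\<^sub>R p0) = 0"
    by (rule tendsto_unique[OF trivial_limit_at_right_real])
  then show ?thesis
    by simp
qed

end

section \<open>Asymptotically self-similar ASE solutions\<close>

text \<open>The time at which the spatial scale (T0 - t) powr (1 - alpha) of the ansatz equals s.\<close>
definition blowup_time :: "real \<Rightarrow> real \<Rightarrow> real \<Rightarrow> real" where
  "blowup_time \<alpha> T0 s = T0 - s powr (1 / (1 - \<alpha>))"

lemma blowup_time_scale: "\<alpha> < 1 \<Longrightarrow> 0 < s \<Longrightarrow> (T0 - blowup_time \<alpha> T0 s) powr (1 - \<alpha>) = s"
  by (simp add: blowup_time_def powr_powr)

lemma blowup_time_bounds:
  assumes "\<alpha> < 1" "0 < T0" "0 < s" "s < T0 powr (1 - \<alpha>)"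
  shows "0 < blowup_time \<alpha> T0 s" "blowup_time \<alpha> T0 s < T0"
proof -
  have "s powr (1 / (1 - \<alpha>)) < (T0 powr (1 - \<alpha>)) powr (1 / (1 - \<alpha>))"
    using assms by (intro powr_less_mono2) auto
  then show "0 < blowup_time \<alpha> T0 s"
    using assms by (simp add: blowup_time_def powr_powr)
  show "blowup_time \<alpha> T0 s < T0"
    using assms by (simp add: blowup_time_def)
qed

lemma filterlim_blowup_time:
  assumes "\<alpha> < 1"
  shows "filterlim (blowup_time \<alpha> T0) (at_left T0) (at_right 0)"
  unfolding filterlim_at
proof
  show "\<forall>\<^sub>F s in at_right 0. blowup_time \<alpha> T0 s \<in> {..<T0} \<and> blowup_time \<alpha> T0 s \<noteq> T0"
    using eventually_at_right_less by eventually_elim (use assms in \<open>simp add: blowup_time_def\<close>)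
  have "((\<lambda>s. s powr (1 / (1 - \<alpha>))) \<longlongrightarrow> 0) (at_right 0)"
    using assms eventually_at_right_less[of 0]
    by (intro tendsto_zero_powrI tendsto_ident_at tendsto_const) (auto elim: eventually_mono)
  then show "(blowup_time \<alpha> T0 \<longlongrightarrow> T0) (at_right 0)"
    unfolding blowup_time_def using tendsto_diff[OF tendsto_const] by fastforce
qed

lemma C2g_loc_continuous_on:
  assumes "C2g_loc \<gamma> S F"
  shows "continuous_on S F"
proof -
  obtain U where "S \<subseteq> U"
    and cont: "\<forall>us. set us \<subseteq> axes3 \<and> length us \<le> 2 \<longrightarrow> continuous_on U (iter_dd F us)"
    using assms unfolding C2g_loc_def by blast
  then show ?thesis
    using cont[rule_format, of "[]"] continuous_on_subset by simp
qed

lemma C22g_loc_norm_bounded: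
  assumes "C22g_loc \<gamma> S I W" "bounded S"
  shows "\<exists>C. \<forall>x\<in>S. \<forall>t\<in>I. norm (W x t) \<le> C"
proof -
  have "adm22 []"
    by (simp add: adm22_def)
  from assms(1)[unfolded C22g_loc_def, THEN conjunct2, rule_format, OF assms(2) this]
  show ?thesis
    by (simp add: Ball_def) meson
qed

lemma ASE_solution_continuous_on:
  assumes "ASE_solution L T0 v p" "0 \<le> t" "t < T0"
  shows "continuous_on cyl (\<lambda>x. v x t)"
proof -
  obtain U where U: "cyl \<times> {0..<T0} \<subseteq> U" and smooth: "smooth_on_open U (\<lambda>(x, t). v x t)"
    using assms(1) unfolding ASE_solution_def by blast
  have "iter_dd (\<lambda>(x, t). v x t) [] differentiable_on U"
    using smooth by (simp only: smooth_on_open_def)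
  then have "continuous_on U (\<lambda>(x, t). v x t)"
    by (simp add: differentiable_imp_continuous_on)
  then show ?thesis
    using U assms(2,3)
    by (intro continuous_on_compose2[of U "\<lambda>(x, t). v x t" cyl "\<lambda>x. (x, t)", simplified])
      (auto intro!: continuous_intros)
qed

lemma ASE_solution_swirl_axisymmetric:
  assumes "ASE_solution L T0 v p" "0 \<le> t" "t < T0"
    and "x \<in> cyl" "0 < rad x" "rad y = rad x" "y$3 = x$3"
  shows "swirl (\<lambda>x. v x t) y = swirl (\<lambda>x. v x t) x"
proof -
  have "\<forall>x y t. x \<in> cyl \<and> 0 < rad x \<and> rad y = rad x \<and> y$3 = x$3 \<and> 0 \<le> t \<and> t < T0 \<longrightarrow>
      v x t \<bullet> e_th x = v y t \<bullet> e_th y"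
    using assms(1) unfolding ASE_solution_def by blast
  then have "v x t \<bullet> e_th x = v y t \<bullet> e_th y"
    using assms(2-) by blast
  then show ?thesis
    by (simp add: swirl_def)
qed

lemma asymptotic_self_similar_swirl_blowup_profile:
  assumes \<alpha>: "\<alpha> < 1" and T0: "0 < T0" and L: "0 < L"
    and ase: "ASE_solution L T0 v p" and \<Theta>: "C2g_loc \<gamma> {y. y$1 \<le> 0} \<Theta>"
    and W: "C22g_loc \<gamma> (fin_cyl L) {0..<T0} W" and g: "g \<in> o[at_left T0](\<lambda>t. T0 - t)"
    and ansatz: "\<forall>x t. x \<in> fin_cyl L \<and> 0 < rad x \<and> 0 \<le> t \<and> t < T0 \<longrightarrow>
               (let y = (1 / (T0 - t) powr (1 - \<alpha>)) *\<^sub>R (x - p0) in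
                v x t = (1 / (T0 - t) powr \<alpha>) *\<^sub>R (\<Theta> y *\<^sub>R e_th x)
                      + ((T0 - t) powr \<beta> / (T0 - t) powr \<alpha>) *\<^sub>R (Vr y *\<^sub>R e_r x)
                      + ((T0 - t) powr \<beta> / (T0 - t) powr \<alpha>) *\<^sub>R (V3 y *\<^sub>R e_3)
                      + (g t / (T0 - t) powr \<alpha>) *\<^sub>R W x t)"
  shows "swirl_blowup_profile L (T0 powr (1 - \<alpha>)) \<Theta> (\<lambda>s x. v x (blowup_time \<alpha> T0 s))
           (\<lambda>s. (T0 - blowup_time \<alpha> T0 s) powr \<alpha>)
           (\<lambda>s x. - g (blowup_time \<alpha> T0 s) * swirl (\<lambda>x. W x (blowup_time \<alpha> T0 s)) x)"
proof
  let ?t = "blowup_time \<alpha> T0"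
  have t: "0 \<le> ?t s" "?t s < T0" if "0 < s" "s < T0 powr (1 - \<alpha>)" for s
    using blowup_time_bounds[OF \<alpha> T0 that] by simp_all
  show "0 < L" "0 < T0 powr (1 - \<alpha>)"
    using L T0 by simp_all
  show "continuous_on {y. y$1 \<le> 0} \<Theta>"
    by (rule C2g_loc_continuous_on[OF \<Theta>])
  show "continuous_on cyl (\<lambda>x. v x (?t s))" if "0 < s" "s < T0 powr (1 - \<alpha>)" for s
    using ASE_solution_continuous_on[OF ase t[OF that]] .
  show "swirl (\<lambda>x. v x (?t s)) y = swirl (\<lambda>x. v x (?t s)) x"
    if "0 < s" "s < T0 powr (1 - \<alpha>)" "x \<in> cyl" "0 < rad x" "rad y = rad x" "y$3 = x$3" for s x y
    using ASE_solution_swirl_axisymmetric[OF ase t[OF that(1,2)] that(3-)] .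
  show "\<Theta> ((1 / s) *\<^sub>R (x - p0)) = (T0 - ?t s) powr \<alpha> * swirl (\<lambda>x. v x (?t s)) x
      + - g (?t s) * swirl (\<lambda>x. W x (?t s)) x"
    if s: "0 < s" "s < T0 powr (1 - \<alpha>)" and x: "x \<in> fin_cyl L" "0 < rad x" for s x
  proof -
    have v: "v x (?t s) = (1 / (T0 - ?t s) powr \<alpha>) *\<^sub>R (\<Theta> ((1 / s) *\<^sub>R (x - p0)) *\<^sub>R e_th x)
        + ((T0 - ?t s) powr \<beta> / (T0 - ?t s) powr \<alpha>) *\<^sub>R (Vr ((1 / s) *\<^sub>R (x - p0)) *\<^sub>R e_r x)
        + ((T0 - ?t s) powr \<beta> / (T0 - ?t s) powr \<alpha>) *\<^sub>R (V3 ((1 / s) *\<^sub>R (x - p0)) *\<^sub>R e_3)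
        + (g (?t s) / (T0 - ?t s) powr \<alpha>) *\<^sub>R W x (?t s)"
      using ansatz[rule_format, of x "?t s"] x t[OF s] blowup_time_scale[OF \<alpha> s(1)]
      by (simp add: Let_def)
    have "(T0 - ?t s) powr \<alpha> \<noteq> 0"
      using t[OF s] by simp
    from swirl_ansatz_coefficient[OF x(2) this v] show ?thesis
      by (simp add: swirl_def)
  qed
  obtain C where C: "\<forall>x\<in>fin_cyl L. \<forall>t\<in>{0..<T0}. norm (W x t) \<le> C"
    using C22g_loc_norm_bounded[OF W bounded_fin_cyl] by blast
  show "uniform_limit (fin_cyl L) (\<lambda>s x. - g (?t s) * swirl (\<lambda>x. W x (?t s)) x) (\<lambda>_. 0) (at_right 0)"
  proof (rule uniform_limit_null_mult_bounded)
    have "(g \<longlongrightarrow> 0) (at_left T0)"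
      by (rule smallo_tendsto_0[OF g]) (intro tendsto_eq_intros tendsto_ident_at; simp)
    then show "((\<lambda>s. - g (?t s)) \<longlongrightarrow> 0) (at_right 0)"
      using tendsto_minus[OF filterlim_compose[OF _ filterlim_blowup_time[OF \<alpha>]]] by fastforce
    show "\<forall>\<^sub>F s in at_right 0. \<forall>x\<in>fin_cyl L. \<bar>swirl (\<lambda>x. W x (?t s)) x\<bar> \<le> C"
      using eventually_at_right_less eventually_at_right_0_mult_less[OF \<open>0 < T0 powr (1 - \<alpha>)\<close>, of 1]
    proof eventually_elim
      case (elim s)
      then show ?case
        using C t[of s] abs_swirl_le_norm order_trans by fastforce
    qed
  qed
qed

theorem proposition1p1:
  fixes \<alpha> \<beta> \<gamma> L T0 :: real
  assumes "\<alpha> < 0" and "\<beta> > 0" and "0 < \<gamma>" and "\<gamma> < 1" and "L > 0" and "T0 > 0"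
  shows "\<not> (\<exists>(v :: (real^3) \<Rightarrow> real \<Rightarrow> real^3) (p :: (real^3) \<Rightarrow> real \<Rightarrow> real)
              (\<Theta> :: (real^3) \<Rightarrow> real) (Vr :: (real^3) \<Rightarrow> real) (V3 :: (real^3) \<Rightarrow> real)
              (W :: (real^3) \<Rightarrow> real \<Rightarrow> real^3) (g :: real \<Rightarrow> real).
            ASE_solution L T0 v p
          \<and> C2g_loc \<gamma> {y. y$1 \<le> 0} \<Theta> \<and> C2g_loc \<gamma> {y. y$1 \<le> 0} Vr \<and> C2g_loc \<gamma> {y. y$1 \<le> 0} V3
          \<and> (\<exists>y. y$1 \<le> 0 \<and> \<Theta> y \<noteq> 0) \<and> (\<exists>y. y$1 \<le> 0 \<and> Vr y \<noteq> 0)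
          \<and> (\<exists>y. y$1 \<le> 0 \<and> V3 y \<noteq> 0)
          \<and> C22g_loc \<gamma> (fin_cyl L) {0..<T0} W
          \<and> g \<in> o[at_left T0](\<lambda>t. T0 - t)
          \<and> (\<forall>x t. x \<in> fin_cyl L \<and> 0 < rad x \<and> 0 \<le> t \<and> t < T0 \<longrightarrow>
               (let y = (1 / (T0 - t) powr (1 - \<alpha>)) *\<^sub>R (x - p0) in
                v x t = (1 / (T0 - t) powr \<alpha>) *\<^sub>R (\<Theta> y *\<^sub>R e_th x)
                      + ((T0 - t) powr \<beta> / (T0 - t) powr \<alpha>) *\<^sub>R (Vr y *\<^sub>R e_r x)
                      + ((T0 - t) powr \<beta> / (T0 - t) powr \<alpha>) *\<^sub>R (V3 y *\<^sub>R e_3)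
                      + (g t / (T0 - t) powr \<alpha>) *\<^sub>R W x t)))"
proof -
  have "\<alpha> < 1"
    using assms(1) by simp
  note profile_vanishes = swirl_blowup_profile.Theta_eq_0[OF
      asymptotic_self_similar_swirl_blowup_profile[OF this assms(6,5)]]
  show ?thesis
    by (blast dest: profile_vanishes)
qed

end
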